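(* Let $p\in\mathbb{N}_0$ and for $j\ge2$ let $\overline{\eta}_j=(-1)^j(2^j-2)\psi^{(j-1)}(1)$. Then, regarding $\binom{2m}{m}=\frac{\Gamma(2m+1)}{\Gamma(m+1)^2}$ as an analytic function of $m$ near $0$, $$\frac{d^p}{dm^p}\binom{2m}{m}\bigg|_{m=0}=(-1)^p B_p(0,\overline{\eta}_2,\overline{\eta}_3,\dots,\overline{\eta}_p)$$ and $$\frac{d^p}{dm^p}\bigg(\frac{1}{4^m}\binom{2m}{m}\bigg)\bigg|_{m=0}=(-1)^p\sum_{i=0}^{p}\binom{p}{i}(\log 4)^{p-i}B_i(0,\overline{\eta}_2,\dots,\overline{\eta}_i).$$
   Context: $\psi^{(n)}(z)=\frac{d^{n+1}}{dz^{n+1}}\log\Gamma(z)$ is the polygamma function. $B_n(s_1,\dots,s_n)$ denotes the complete Bell polynomial, defined by $\exp\big(\sum_{j\ge1}s_j t^j/j!\big)=\sum_{n\ge0}B_n(s_1,\dots,s_n)t^n/n!$; $B_0=1$. *)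

theory Defs
  imports "HOL-Analysis.Analysis" "HOL-Computational_Algebra.Formal_Power_Series"
begin

text \<open>Complete Bell polynomial B_n(s_1,...,s_n), defined via the exponential generating
  function exp(sum_{j>=1} s_j t^j / j!) = sum_n B_n t^n / n!.  Only s_1..s_n matter;
  s 0 is ignored.\<close>
definition complete_bell :: "nat \<Rightarrow> (nat \<Rightarrow> real) \<Rightarrow> real" where
  "complete_bell n s =
     fact n * fps_nth (fps_exp 1 oo Abs_fps (\<lambda>j. if j = 0 then 0 else s j / fact j)) n"

end

theory Submission
  imports Defs "HOL-Complex_Analysis.Complex_Analysis"
begin

text \<open>Near \<open>m = 0\<close> the central binomial coefficient is \<open>exp (H m)\<close> with
  \<open>H m = ln \<Gamma>(2m+1) - 2 ln \<Gamma>(m+1)\<close>, whose \<open>j\<close>-th derivative at \<open>0\<close> is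
  \<open>(2^j - 2) \<psi>^(j-1)(1) = (-1)^j \<eta>\<^sub>j\<close> (it vanishes for \<open>j = 1\<close>).
  The derivatives of \<open>exp \<circ> H\<close> satisfy the same recurrence as the complete Bell polynomials,
  and the sign \<open>(-1)^j\<close> factors out of \<open>B\<^sub>p\<close> as \<open>(-1)^p\<close>. The factor \<open>4 powr -m\<close>
  is \<open>exp (- m ln 4)\<close> and is handled by the Leibniz rule. All derivatives are computed for the
  holomorphic extension to \<open>Re z > -1/2\<close>, where they agree with the real ones.\<close>

lemma higher_deriv_complex_of_real:
  fixes f :: "real \<Rightarrow> real" and F :: "complex \<Rightarrow> complex"
  assumes F: "F holomorphic_on S" "open S" and T: "open T" "of_real ` T \<subseteq> S"
    and eq: "\<And>y. y \<in> T \<Longrightarrow> F (of_real y) = of_real (f y)"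
  shows "x \<in> T \<Longrightarrow> (deriv ^^ n) F (of_real x) = of_real ((deriv ^^ n) f x)"
proof (induction n arbitrary: x)
  case 0
  then show ?case using eq by simp
next
  case (Suc n x)
  define D where "D = (deriv ^^ Suc n) F (of_real x)"
  have "complex_of_real x \<in> S" using Suc.prems T by auto
  then have "((deriv ^^ n) F has_field_derivative D) (at (of_real x))"
    unfolding D_def by (rule has_field_derivative_higher_deriv[OF F])
  then have vd: "((\<lambda>y. (deriv ^^ n) F (of_real y)) has_vector_derivative D) (at x)"
    by (rule has_vector_derivative_real_field)
  have re: "((deriv ^^ n) f has_field_derivative Re D) (at x)"
    by (rule has_field_derivative_transform_within_open[OF has_field_derivative_Re[OF vd] T(1) Suc.prems])
       (simp add: Suc.IH)
  have "((\<lambda>y. 0) has_field_derivative Im D) (at x)"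
    by (rule has_field_derivative_transform_within_open[OF has_field_derivative_Im[OF vd] T(1) Suc.prems])
       (simp add: Suc.IH)
  then have "Im D = 0" using DERIV_const DERIV_unique by blast
  then have "D = of_real (Re D)" by (simp add: complex_eq_iff)
  moreover have "(deriv ^^ Suc n) f x = Re D" using DERIV_imp_deriv[OF re] by simp
  ultimately show ?case unfolding D_def by simp
qed

lemma complete_bell_0 [simp]: "complete_bell 0 s = 1"
  by (simp add: complete_bell_def)

lemma complete_bell_Suc:
  "complete_bell (Suc n) s = (\<Sum>i=0..n. real (n choose i) * complete_bell i s * s (Suc (n - i)))"
proof -
  define A :: "real fps" where "A = Abs_fps (\<lambda>j. if j = 0 then 0 else s j / fact j)"
  define E where "E = fps_exp 1 oo A"
  have bell: "complete_bell i s = fact i * fps_nth E i" for i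
    by (simp add: complete_bell_def E_def A_def)
  have "fps_deriv E = (fps_deriv (fps_exp 1) oo A) * fps_deriv A"
    unfolding E_def by (rule fps_compose_deriv) (simp add: A_def)
  then have dE: "fps_deriv E = E * fps_deriv A" by (simp add: E_def)
  have "of_nat (Suc n) * fps_nth E (Suc n) = fps_nth (E * fps_deriv A) n"
    using arg_cong[OF dE, of "\<lambda>f. fps_nth f n"] by simp
  also have "\<dots> = (\<Sum>i=0..n. fps_nth E i * (real (Suc (n - i)) * (s (Suc (n - i)) / fact (Suc (n - i)))))"
    by (simp add: fps_mult_nth A_def del: of_nat_Suc)
  also have "\<dots> = (\<Sum>i=0..n. fps_nth E i * s (Suc (n - i)) / fact (n - i))"
    by (intro sum.cong refl) (simp add: field_simps del: of_nat_Suc)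
  finally have rec: "of_nat (Suc n) * fps_nth E (Suc n) =
      (\<Sum>i=0..n. fps_nth E i * s (Suc (n - i)) / fact (n - i))" .
  have "complete_bell (Suc n) s = fact n * (of_nat (Suc n) * fps_nth E (Suc n))"
    by (simp add: bell)
  also have "\<dots> = (\<Sum>i=0..n. fact n * (fps_nth E i * s (Suc (n - i)) / fact (n - i)))"
    by (simp only: rec sum_distrib_left)
  also have "\<dots> = (\<Sum>i=0..n. real (n choose i) * complete_bell i s * s (Suc (n - i)))"
  proof (intro sum.cong refl)
    fix i assume "i \<in> {0..n}"
    then have "real (n choose i) = fact n / (fact i * fact (n - i))"
      by (simp add: binomial_fact)
    then show "fact n * (fps_nth E i * s (Suc (n - i)) / fact (n - i)) =
        real (n choose i) * complete_bell i s * s (Suc (n - i))"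
      by (simp add: bell field_simps)
  qed
  finally show ?thesis .
qed

lemma complete_bell_scale:
  "complete_bell n (\<lambda>j. c ^ j * s j) = c ^ n * complete_bell n s"
proof (induction n rule: less_induct)
  case (less n)
  show ?case
  proof (cases n)
    case (Suc m)
    have "complete_bell (Suc m) (\<lambda>j. c ^ j * s j) =
        (\<Sum>i=0..m. c ^ Suc m * (real (m choose i) * complete_bell i s * s (Suc (m - i))))"
      unfolding complete_bell_Suc
    proof (intro sum.cong refl)
      fix i assume "i \<in> {0..m}"
      then have "c ^ i * c ^ Suc (m - i) = c ^ Suc m" and "i < n"
        using Suc by (simp_all flip: power_add)
      then show "real (m choose i) * complete_bell i (\<lambda>j. c ^ j * s j) * (c ^ Suc (m - i) * s (Suc (m - i))) =
          c ^ Suc m * (real (m choose i) * complete_bell i s * s (Suc (m - i)))"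
        using less.IH[of i] by (metis (no_types, lifting) mult.assoc mult.left_commute)
    qed
    then show ?thesis
      using Suc by (simp only: complete_bell_Suc sum_distrib_left)
  qed simp
qed

lemma higher_deriv_exp_compose_Suc:
  fixes H :: "complex \<Rightarrow> complex"
  assumes H: "H holomorphic_on S" "open S" and z: "z \<in> S"
  shows "(deriv ^^ Suc n) (\<lambda>w. exp (H w)) z =
    (\<Sum>i=0..n. of_nat (n choose i) * (deriv ^^ i) (\<lambda>w. exp (H w)) z * (deriv ^^ Suc (n - i)) H z)"
proof -
  have E: "(\<lambda>w. exp (H w)) holomorphic_on S" using H by (intro holomorphic_intros)
  have dH: "deriv H holomorphic_on S" using H by (intro holomorphic_deriv)
  have dE: "deriv (\<lambda>w. exp (H w)) w = exp (H w) * deriv H w" if "w \<in> S" for w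
  proof -
    have "(H has_field_derivative deriv H w) (at w)"
      using H that by (intro holomorphic_derivI) auto
    then have "((\<lambda>w. exp (H w)) has_field_derivative exp (H w) * deriv H w) (at w)"
      by (auto intro!: derivative_eq_intros)
    then show ?thesis by (rule DERIV_imp_deriv)
  qed
  have "(deriv ^^ Suc n) (\<lambda>w. exp (H w)) z = (deriv ^^ n) (deriv (\<lambda>w. exp (H w))) z"
    by (simp del: funpow.simps add: funpow_Suc_right)
  also have "\<dots> = (deriv ^^ n) (\<lambda>w. exp (H w) * deriv H w) z"
    by (rule higher_deriv_transform_within_open[OF _ _ H(2) z])
       (auto intro: holomorphic_intros E dH simp: dE holomorphic_deriv[OF E H(2)])
  also have "\<dots> = (\<Sum>i=0..n. of_nat (n choose i) * (deriv ^^ i) (\<lambda>w. exp (H w)) z * (deriv ^^ (n - i)) (deriv H) z)"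
    by (rule higher_deriv_mult[OF E dH H(2) z])
  also have "\<dots> = (\<Sum>i=0..n. of_nat (n choose i) * (deriv ^^ i) (\<lambda>w. exp (H w)) z * (deriv ^^ Suc (n - i)) H z)"
    by (simp del: funpow.simps add: funpow_Suc_right)
  finally show ?thesis .
qed

lemma higher_deriv_exp_compose_complete_bell:
  fixes H :: "complex \<Rightarrow> complex"
  assumes H: "H holomorphic_on S" "open S" and z: "z \<in> S"
    and real_derivs: "\<And>j. j \<ge> 1 \<Longrightarrow> (deriv ^^ j) H z = of_real (d j)"
  shows "(deriv ^^ n) (\<lambda>w. exp (H w)) z = exp (H z) * of_real (complete_bell n d)"
proof (induction n rule: less_induct)
  case (less n)
  show ?case
  proof (cases n)
    case (Suc m)
    have "(deriv ^^ Suc m) (\<lambda>w. exp (H w)) z =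
        (\<Sum>i=0..m. exp (H z) * of_real (real (m choose i) * complete_bell i d * d (Suc (m - i))))"
      unfolding higher_deriv_exp_compose_Suc[OF H z]
    proof (intro sum.cong refl)
      fix i assume "i \<in> {0..m}"
      then show "of_nat (m choose i) * (deriv ^^ i) (\<lambda>w. exp (H w)) z * (deriv ^^ Suc (m - i)) H z =
          exp (H z) * of_real (real (m choose i) * complete_bell i d * d (Suc (m - i)))"
        using Suc less.IH[of i] real_derivs[of "Suc (m - i)"] by simp
    qed
    then show ?thesis
      using Suc by (simp only: complete_bell_Suc of_real_sum sum_distrib_left)
  qed simp
qed

lemma higher_deriv_exp_linear:
  "(deriv ^^ n) (\<lambda>w. exp (c * w)) (z::complex) = c ^ n * exp (c * z)"
proof -
  have "deriv (exp :: complex \<Rightarrow> complex) = exp"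
    by (rule ext, rule DERIV_imp_deriv) (rule DERIV_exp)
  then have exp_derivs: "(deriv ^^ n) exp = (exp :: complex \<Rightarrow> complex)" for n
    by (induction n) simp_all
  have "(deriv ^^ n) (\<lambda>w. exp (c * w)) z = c ^ n * (deriv ^^ n) exp (c * z)"
    by (rule higher_deriv_compose_linear[where S=UNIV and T=UNIV])
       (auto simp: holomorphic_on_def field_differentiable_within_exp)
  then show ?thesis by (simp add: exp_derivs)
qed

definition eta_bar :: "nat \<Rightarrow> real" where
  "eta_bar j = (-1) ^ j * (2 ^ j - 2) * Polygamma (j - 1) 1"

definition ln_central_binomial :: "complex \<Rightarrow> complex" where
  "ln_central_binomial z = ln_Gamma (2 * z + 1) - 2 * ln_Gamma (z + 1)"

lemma holomorphic_ln_Gamma_scaled_plus_1: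
  assumes "c \<in> {1, 2}"
  shows "(\<lambda>z. ln_Gamma (of_nat c * z + 1)) holomorphic_on {z. Re z > -1/2}"
proof -
  have lnG: "ln_Gamma holomorphic_on {z. Re z > 0}"
    by (rule holomorphic_ln_Gamma) (auto simp: complex_nonpos_Reals_iff)
  show ?thesis
    using assms by (intro holomorphic_on_compose_gen[OF _ lnG, unfolded o_def]) (auto intro!: holomorphic_intros)
qed

lemma holomorphic_ln_central_binomial:
  "ln_central_binomial holomorphic_on {z. Re z > -1/2}"
  using holomorphic_ln_Gamma_scaled_plus_1[of 1] holomorphic_ln_Gamma_scaled_plus_1[of 2]
  unfolding ln_central_binomial_def[abs_def] by (auto intro!: holomorphic_intros)

lemma higher_deriv_ln_central_binomial:
  assumes "j \<ge> 1"
  shows "(deriv ^^ j) ln_central_binomial 0 = of_real ((-1) ^ j * eta_bar j)"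
proof -
  let ?S = "{z::complex. Re z > -1/2}" and ?T = "{z::complex. Re z > 0}"
  have S: "open ?S" "0 \<in> ?S" and T: "open ?T"
    by (simp_all add: open_halfspace_Re_gt)
  have lnG: "ln_Gamma holomorphic_on ?T"
    by (rule holomorphic_ln_Gamma) (auto simp: complex_nonpos_Reals_iff)
  have lnG_affine: "(deriv ^^ j) (\<lambda>z. ln_Gamma (of_nat c * z + 1)) (0::complex) = of_nat c ^ j * of_real (Polygamma (j - 1) 1)"
    if "c \<in> {1, 2}" for c
  proof -
    have "(deriv ^^ j) (\<lambda>z. ln_Gamma (of_nat c * z + 1)) (0::complex) = of_nat c ^ j * (deriv ^^ j) ln_Gamma (of_nat c * 0 + 1)"
      by (rule higher_deriv_compose_linear'[OF lnG S(1) T S(2)]) (use that in auto)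
    also have "(deriv ^^ j) ln_Gamma (of_nat c * 0 + 1 :: complex) = of_real (Polygamma (j - 1) 1)"
      using assms by (subst higher_deriv_ln_Gamma_complex)
        (auto simp: complex_nonpos_Reals_iff Polygamma_of_real[symmetric])
    finally show ?thesis .
  qed
  have holo1: "(\<lambda>z. ln_Gamma (z + 1)) holomorphic_on ?S" and holo2: "(\<lambda>z. ln_Gamma (2 * z + 1)) holomorphic_on ?S"
    using holomorphic_ln_Gamma_scaled_plus_1[of 1] holomorphic_ln_Gamma_scaled_plus_1[of 2] by simp_all
  have "(deriv ^^ j) ln_central_binomial 0 =
      (deriv ^^ j) (\<lambda>z. ln_Gamma (2 * z + 1)) 0 - (deriv ^^ j) (\<lambda>z. 2 * ln_Gamma (z + 1)) 0"
    unfolding ln_central_binomial_def[abs_def]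
    by (rule higher_deriv_diff[OF holo2 _ S]) (intro holomorphic_intros holo1)
  also have "\<dots> = of_real ((2 ^ j - 2) * Polygamma (j - 1) 1)"
    using lnG_affine[of 1] lnG_affine[of 2] higher_deriv_cmult[OF holo1 S(2,1)]
    by (simp add: algebra_simps)
  also have "(2 ^ j - 2) * Polygamma (j - 1) 1 = (-1) ^ j * eta_bar j"
    by (simp add: eta_bar_def flip: mult.assoc power_mult_distrib)
  finally show ?thesis .
qed

lemma exp_ln_central_binomial_of_real:
  assumes "y > -1/2"
  shows "exp (ln_central_binomial (of_real y)) = of_real (Gamma (2 * y + 1) / Gamma (y + 1) ^ 2)"
proof -
  have pos: "2 * y + 1 > 0" "y + 1 > 0" using assms by auto
  have "ln_central_binomial (of_real y) = of_real (ln_Gamma (2 * y + 1) - 2 * ln_Gamma (y + 1))"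
    unfolding ln_central_binomial_def
    using ln_Gamma_complex_of_real[OF pos(1)] ln_Gamma_complex_of_real[OF pos(2)] by simp
  then have "exp (ln_central_binomial (of_real y)) = of_real (exp (ln_Gamma (2 * y + 1) - 2 * ln_Gamma (y + 1)))"
    by (simp only: exp_of_real)
  also have "exp (ln_Gamma (2 * y + 1) - 2 * ln_Gamma (y + 1)) = Gamma (2 * y + 1) / Gamma (y + 1) ^ 2"
    unfolding Gamma_real_pos_exp[OF pos(1)] Gamma_real_pos_exp[OF pos(2)] by (simp only: exp_diff exp_double)
  finally show ?thesis .
qed

lemma higher_deriv_exp_ln_central_binomial:
  "(deriv ^^ n) (\<lambda>z. exp (ln_central_binomial z)) 0 = of_real ((-1) ^ n * complete_bell n eta_bar)"
proof -
  have "(deriv ^^ n) (\<lambda>z. exp (ln_central_binomial z)) 0 =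
      exp (ln_central_binomial 0) * of_real (complete_bell n (\<lambda>j. (-1) ^ j * eta_bar j))"
    by (rule higher_deriv_exp_compose_complete_bell[OF holomorphic_ln_central_binomial
          open_halfspace_Re_gt _ higher_deriv_ln_central_binomial]) simp_all
  moreover have "exp (ln_central_binomial 0) = 1"
    using exp_ln_central_binomial_of_real[of 0] by simp
  ultimately show ?thesis by (simp add: complete_bell_scale)
qed

lemma higher_deriv_central_binomial:
  "(deriv ^^ p) (\<lambda>m::real. Gamma (2 * m + 1) / Gamma (m + 1) ^ 2) 0 = (-1) ^ p * complete_bell p eta_bar"
proof -
  have "(deriv ^^ p) (\<lambda>z. exp (ln_central_binomial z)) (of_real 0) =
      of_real ((deriv ^^ p) (\<lambda>m::real. Gamma (2 * m + 1) / Gamma (m + 1) ^ 2) 0)"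
    by (rule higher_deriv_complex_of_real[OF holomorphic_on_exp'[OF holomorphic_ln_central_binomial]
          open_halfspace_Re_gt open_greaterThan _ exp_ln_central_binomial_of_real]) auto
  from this[unfolded of_real_0 higher_deriv_exp_ln_central_binomial of_real_eq_iff] show ?thesis
    by (rule sym)
qed

lemma higher_deriv_central_binomial_div_4_powr:
  "(deriv ^^ p) (\<lambda>m::real. Gamma (2 * m + 1) / Gamma (m + 1) ^ 2 / 4 powr m) 0 =
    (-1) ^ p * (\<Sum>i\<le>p. real (p choose i) * ln 4 ^ (p - i) * complete_bell i eta_bar)"
proof -
  let ?S = "{z::complex. Re z > -1/2}"
  define c :: complex where "c = - of_real (ln 4)"
  have E: "(\<lambda>z. exp (ln_central_binomial z)) holomorphic_on ?S"
    by (rule holomorphic_on_exp'[OF holomorphic_ln_central_binomial])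
  have L: "(\<lambda>z. exp (c * z)) holomorphic_on ?S"
    by (intro holomorphic_intros)
  have eq: "exp (ln_central_binomial (of_real y)) * exp (c * of_real y) =
      of_real (Gamma (2 * y + 1) / Gamma (y + 1) ^ 2 / 4 powr y)" if "y \<in> {-1/2<..}" for y
    using that by (simp add: exp_ln_central_binomial_of_real c_def powr_def exp_minus field_simps
        flip: exp_of_real)
  have "of_real ((deriv ^^ p) (\<lambda>m::real. Gamma (2 * m + 1) / Gamma (m + 1) ^ 2 / 4 powr m) 0) =
      (deriv ^^ p) (\<lambda>z. exp (ln_central_binomial z) * exp (c * z)) 0"
    by (rule sym, rule higher_deriv_complex_of_real[OF holomorphic_on_mult[OF E L] open_halfspace_Re_gt
          open_greaterThan _ eq, where x=0, unfolded of_real_0]) auto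
  also have "\<dots> = (\<Sum>i=0..p. of_nat (p choose i) * (deriv ^^ i) (\<lambda>z. exp (ln_central_binomial z)) 0 *
        (deriv ^^ (p - i)) (\<lambda>z. exp (c * z)) 0)"
    by (rule higher_deriv_mult[OF E L open_halfspace_Re_gt]) simp
  also have "\<dots> = (\<Sum>i\<le>p. of_real ((-1) ^ p * (real (p choose i) * ln 4 ^ (p - i) * complete_bell i eta_bar)))"
    unfolding atLeast0AtMost
  proof (intro sum.cong refl)
    fix i assume "i \<in> {..p}"
    then have "(-1::real) ^ i * (-1) ^ (p - i) = (-1) ^ p"
      by (simp flip: power_add)
    moreover have "c ^ (p - i) = of_real ((-1) ^ (p - i) * ln 4 ^ (p - i))"
      by (simp add: c_def power_minus')
    ultimately show "of_nat (p choose i) * (deriv ^^ i) (\<lambda>z. exp (ln_central_binomial z)) 0 *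
        (deriv ^^ (p - i)) (\<lambda>z. exp (c * z)) 0 =
        of_real ((-1) ^ p * (real (p choose i) * ln 4 ^ (p - i) * complete_bell i eta_bar))"
      unfolding higher_deriv_exp_ln_central_binomial higher_deriv_exp_linear mult_zero_right exp_zero
        mult_1_right
      by (simp only: of_real_mult of_real_of_nat_eq flip: \<open>(-1) ^ i * (-1) ^ (p - i) = (-1) ^ p\<close>)
        (simp add: algebra_simps)
  qed
  finally show ?thesis
    by (simp only: of_real_eq_iff flip: of_real_sum sum_distrib_left)
qed

theorem mainTheorem6:
  fixes p :: nat
  defines "eta \<equiv> (\<lambda>j::nat. (-1) ^ j * (2 ^ j - 2) * Polygamma (j - 1) (1::real))"
  defines "s \<equiv> (\<lambda>j::nat. if j = 1 then 0 else eta j)"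
  shows "((deriv ^^ p) (\<lambda>m::real. Gamma (2 * m + 1) / Gamma (m + 1) ^ 2) 0
           = (-1) ^ p * complete_bell p s)
      \<and> ((deriv ^^ p) (\<lambda>m::real. Gamma (2 * m + 1) / Gamma (m + 1) ^ 2 / 4 powr m) 0
           = (-1) ^ p * (\<Sum>i\<le>p. real (p choose i) * ln 4 ^ (p - i) * complete_bell i s))"
proof -
  have "s = eta_bar"
    unfolding s_def eta_def eta_bar_def by auto
  then show ?thesis
    using higher_deriv_central_binomial higher_deriv_central_binomial_div_4_powr by simp
qed

end
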